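(* Let $\Gamma$ be a connected unbalanced unicyclic signed graph (with at least one edge) whose Laplacian eigenvalues are $\mu_1\ge\mu_2\ge\cdots\ge\mu_n>0$. Then $S(\Gamma)\times K_2$ and $S(\Gamma)\otimes K_2$ are noncospectral and equienergetic if and only if $\mu_n\ge 1$.
   Context: A signed graph $\Gamma=(G,\sigma)$ is a simple graph $G$ with a sign function $\sigma:E(G)\to\{1,-1\}$; $A(\Gamma)$ has $(i,j)$ entry $\sigma(v_iv_j)$ if $v_iv_j\in E(G)$ and $0$ otherwise, and $L(\Gamma)=D(G)-A(\Gamma)$ with $D(G)$ the diagonal degree matrix. Unbalanced means some cycle has an odd number of negative edges; unicyclic means $G$ is connected with exactly one cycle. The energy $\mathcal{E}(\Gamma)$ is the sum of absolute values of the adjacency eigenvalues; two signed graphs are equienergetic if they have equal energy, and noncospectral if their adjacency spectra differ. Signed subdivision graph $S(\Gamma)$: fix $\vartheta(v,e)\in\{1,-1\}$ for each vertex $v$ incident with edge $e$, with $\vartheta(v,e)\vartheta(w,e)=-\sigma(e)$ for every edge $e=vw$; $S(\Gamma)$ has vertex set $V(G)\cup E(G)$ and an edge $ve$ of sign $\vartheta(v,e)$ whenever $v$ is an end of $e$, and no other edges. $K_2$ denotes the single positive edge. For signed graphs $\Gamma_1=(G_1,\sigma_1)$, $\Gamma_2=(G_2,\sigma_2)$: the Cartesian product $\Gamma_1\times\Gamma_2$ has vertex set $V(G_1)\times V(G_2)$, with $(u_i,v_j)\sim(u_k,v_l)$ of sign $\sigma_1(u_iu_k)$ if $j=l$ and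 $u_iu_k\in E(G_1)$, and of sign $\sigma_2(v_jv_l)$ if $i=k$ and $v_jv_l\in E(G_2)$. The Kronecker product $\Gamma_1\otimes\Gamma_2$ has vertex set $V(G_1)\times V(G_2)$, with $(u_i,v_j)\sim(u_k,v_l)$ iff $u_iu_k\in E(G_1)$ and $v_jv_l\in E(G_2)$, of sign $\sigma_1(u_iu_k)\sigma_2(v_jv_l)$. *)

theory Defs
  imports "HOL-Computational_Algebra.Computational_Algebra" "HOL-Combinatorics.Permutations"
begin

text \<open>A signed graph is given by a finite vertex set V and a sign function
  s with s u v \<in> {-1,0,1}; u v is an edge iff s u v \<noteq> 0, and then s u v is its sign.\<close>

definition signed_graph :: "'a set \<Rightarrow> ('a \<Rightarrow> 'a \<Rightarrow> int) \<Rightarrow> bool" where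
  "signed_graph V s \<longleftrightarrow> finite V \<and> (\<forall>u v. s u v \<in> {-1, 0, 1}) \<and> (\<forall>u v. s u v = s v u)
     \<and> (\<forall>v. s v v = 0) \<and> (\<forall>u v. s u v \<noteq> 0 \<longrightarrow> u \<in> V \<and> v \<in> V)"

definition sg_edges :: "'a set \<Rightarrow> ('a \<Rightarrow> 'a \<Rightarrow> int) \<Rightarrow> 'a set set" where
  "sg_edges V s = {{u, v} | u v. u \<in> V \<and> v \<in> V \<and> s u v \<noteq> 0}"

definition sg_connected :: "'a set \<Rightarrow> ('a \<Rightarrow> 'a \<Rightarrow> int) \<Rightarrow> bool" where
  "sg_connected V s \<longleftrightarrow> V \<noteq> {} \<and>
     (\<forall>u\<in>V. \<forall>v\<in>V. (\<lambda>x y. x \<in> V \<and> y \<in> V \<and> s x y \<noteq> 0)\<^sup>*\<^sup>* u v)"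

definition is_cycle :: "'a set \<Rightarrow> ('a \<Rightarrow> 'a \<Rightarrow> int) \<Rightarrow> 'a list \<Rightarrow> bool" where
  "is_cycle V s xs \<longleftrightarrow> length xs \<ge> 3 \<and> distinct xs \<and> set xs \<subseteq> V \<and>
     (\<forall>i < length xs. s (xs ! i) (xs ! ((i + 1) mod length xs)) \<noteq> 0)"

definition cycle_edges :: "'a list \<Rightarrow> 'a set set" where
  "cycle_edges xs = {{xs ! i, xs ! ((i + 1) mod length xs)} | i. i < length xs}"

definition cycle_sign :: "('a \<Rightarrow> 'a \<Rightarrow> int) \<Rightarrow> 'a list \<Rightarrow> int" where
  "cycle_sign s xs = (\<Prod>i<length xs. s (xs ! i) (xs ! ((i + 1) mod length xs)))"

text \<open>Cycles are identified with their edge sets (so rotations/reversals of the same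
  cycle count once).\<close>

definition unicyclic :: "'a set \<Rightarrow> ('a \<Rightarrow> 'a \<Rightarrow> int) \<Rightarrow> bool" where
  "unicyclic V s \<longleftrightarrow> sg_connected V s \<and> card {cycle_edges xs | xs. is_cycle V s xs} = 1"

definition unbalanced :: "'a set \<Rightarrow> ('a \<Rightarrow> 'a \<Rightarrow> int) \<Rightarrow> bool" where
  "unbalanced V s \<longleftrightarrow> (\<exists>xs. is_cycle V s xs \<and> cycle_sign s xs = -1)"

definition det_on :: "'a set \<Rightarrow> ('a \<Rightarrow> 'a \<Rightarrow> 'b::comm_ring_1) \<Rightarrow> 'b" where
  "det_on V M = (\<Sum>p\<in>{p. p permutes V}. of_int (sign p) * (\<Prod>i\<in>V. M i (p i)))"

definition charpoly_on :: "'a set \<Rightarrow> ('a \<Rightarrow> 'a \<Rightarrow> real) \<Rightarrow> real poly" where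
  "charpoly_on V M = det_on V (\<lambda>i j. (if i = j then [:0, 1:] else 0) - [:M i j:])"

text \<open>Spectrum (eigenvalues with multiplicity) of a real symmetric matrix: the roots of
  its characteristic polynomial (all real).\<close>

definition spectrum_on :: "'a set \<Rightarrow> ('a \<Rightarrow> 'a \<Rightarrow> real) \<Rightarrow> real multiset" where
  "spectrum_on V M = proots (charpoly_on V M)"

definition adj_matrix :: "('a \<Rightarrow> 'a \<Rightarrow> int) \<Rightarrow> 'a \<Rightarrow> 'a \<Rightarrow> real" where
  "adj_matrix s i j = real_of_int (s i j)"

definition lap_matrix :: "'a set \<Rightarrow> ('a \<Rightarrow> 'a \<Rightarrow> int) \<Rightarrow> 'a \<Rightarrow> 'a \<Rightarrow> real" where
  "lap_matrix V s i j =
     (if i = j then real (card {w \<in> V. s i w \<noteq> 0}) else 0) - real_of_int (s i j)"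

definition adj_spectrum :: "'a set \<Rightarrow> ('a \<Rightarrow> 'a \<Rightarrow> int) \<Rightarrow> real multiset" where
  "adj_spectrum V s = spectrum_on V (adj_matrix s)"

definition lap_spectrum :: "'a set \<Rightarrow> ('a \<Rightarrow> 'a \<Rightarrow> int) \<Rightarrow> real multiset" where
  "lap_spectrum V s = spectrum_on V (lap_matrix V s)"

definition energy :: "'a set \<Rightarrow> ('a \<Rightarrow> 'a \<Rightarrow> int) \<Rightarrow> real" where
  "energy V s = (\<Sum>x\<in>#adj_spectrum V s. \<bar>x\<bar>)"

definition equienergetic ::
  "'a set \<Rightarrow> ('a \<Rightarrow> 'a \<Rightarrow> int) \<Rightarrow> 'b set \<Rightarrow> ('b \<Rightarrow> 'b \<Rightarrow> int) \<Rightarrow> bool" where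
  "equienergetic V1 s1 V2 s2 \<longleftrightarrow> energy V1 s1 = energy V2 s2"

definition noncospectral ::
  "'a set \<Rightarrow> ('a \<Rightarrow> 'a \<Rightarrow> int) \<Rightarrow> 'b set \<Rightarrow> ('b \<Rightarrow> 'b \<Rightarrow> int) \<Rightarrow> bool" where
  "noncospectral V1 s1 V2 s2 \<longleftrightarrow> adj_spectrum V1 s1 \<noteq> adj_spectrum V2 s2"

definition valid_subdiv_signs ::
  "'a set \<Rightarrow> ('a \<Rightarrow> 'a \<Rightarrow> int) \<Rightarrow> ('a \<Rightarrow> 'a set \<Rightarrow> int) \<Rightarrow> bool" where
  "valid_subdiv_signs V s \<theta> \<longleftrightarrow>
     (\<forall>e\<in>sg_edges V s. \<forall>v\<in>e. \<theta> v e \<in> {-1, 1}) \<and>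
     (\<forall>u\<in>V. \<forall>v\<in>V. s u v \<noteq> 0 \<longrightarrow> \<theta> u {u, v} * \<theta> v {u, v} = - s u v)"

definition subdiv_vertices :: "'a set \<Rightarrow> ('a \<Rightarrow> 'a \<Rightarrow> int) \<Rightarrow> ('a + 'a set) set" where
  "subdiv_vertices V s = Inl ` V \<union> Inr ` sg_edges V s"

fun subdiv_sign ::
  "'a set \<Rightarrow> ('a \<Rightarrow> 'a \<Rightarrow> int) \<Rightarrow> ('a \<Rightarrow> 'a set \<Rightarrow> int) \<Rightarrow> 'a + 'a set \<Rightarrow> 'a + 'a set \<Rightarrow> int" where
  "subdiv_sign V s \<theta> (Inl v) (Inr e) = (if e \<in> sg_edges V s \<and> v \<in> e then \<theta> v e else 0)"
| "subdiv_sign V s \<theta> (Inr e) (Inl v) = (if e \<in> sg_edges V s \<and> v \<in> e then \<theta> v e else 0)"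
| "subdiv_sign V s \<theta> _ _ = 0"

definition K2_vertices :: "bool set" where "K2_vertices = UNIV"

definition K2_sign :: "bool \<Rightarrow> bool \<Rightarrow> int" where
  "K2_sign a b = (if a \<noteq> b then 1 else 0)"

definition prod_vertices :: "'a set \<Rightarrow> 'b set \<Rightarrow> ('a \<times> 'b) set" where
  "prod_vertices V1 V2 = V1 \<times> V2"

definition cart_sign ::
  "('a \<Rightarrow> 'a \<Rightarrow> int) \<Rightarrow> ('b \<Rightarrow> 'b \<Rightarrow> int) \<Rightarrow> 'a \<times> 'b \<Rightarrow> 'a \<times> 'b \<Rightarrow> int" where
  "cart_sign s1 s2 x y =
     (if snd x = snd y then s1 (fst x) (fst y)
      else if fst x = fst y then s2 (snd x) (snd y) else 0)"

definition kron_sign ::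
  "('a \<Rightarrow> 'a \<Rightarrow> int) \<Rightarrow> ('b \<Rightarrow> 'b \<Rightarrow> int) \<Rightarrow> 'a \<times> 'b \<Rightarrow> 'a \<times> 'b \<Rightarrow> int" where
  "kron_sign s1 s2 x y = s1 (fst x) (fst y) * s2 (snd x) (snd y)"

end

theory Submission
  imports Defs "Jordan_Normal_Form.Char_Poly"
begin

text \<open>Let \<open>\<Gamma>\<close> have \<open>n\<close> vertices and \<open>m\<close> edges, and let \<open>B\<close> be the signed vertex-edge
  incidence matrix given by \<open>\<vartheta>\<close>. Then \<open>A(S(\<Gamma>)) = [[0, B], [B\<^sup>T, 0]]\<close> and \<open>B B\<^sup>T = L(\<Gamma>)\<close>,
  so \<open>x\<^sup>n \<chi>\<^sub>S(x) = x\<^sup>m \<chi>\<^sub>L(x\<^sup>2)\<close>. A unicyclic graph has \<open>m \<le> n\<close>, and \<open>m < n\<close> would make 0 a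
  Laplacian eigenvalue; hence the spectrum of \<open>S(\<Gamma>)\<close> is \<open>{\<plusminus>\<surd>\<mu>\<^sub>i}\<close>. For any signed graph
  with spectrum \<open>\<Lambda>\<close>, the Cartesian product with \<open>K\<^sub>2\<close> has spectrum \<open>(\<Lambda> + 1) \<union> (\<Lambda> - 1)\<close>
  and the Kronecker product has \<open>\<Lambda> \<union> -\<Lambda>\<close>. These never coincide (shift an eigenvalue of
  maximal modulus away from 0), and since \<open>|\<lambda> + 1| + |\<lambda> - 1| = 2 max(|\<lambda>|, 1)\<close>, the energies
  agree iff every \<open>|\<lambda>| = \<surd>\<mu>\<^sub>i\<close> is at least 1.\<close>

section \<open>Roots of composed polynomials\<close>

lemma order_power:
  fixes p :: "'a::idom poly"
  assumes "p \<noteq> 0"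
  shows "order a (p ^ k) = k * order a p"
  using assms by (induction k) (simp_all add: order_mult)

lemma order_pcompose_simple_root:
  fixes p q g :: "'a::idom poly"
  assumes p: "p \<noteq> 0" and q: "q - [:poly q x:] = [:-x, 1:] * g" and g: "poly g x \<noteq> 0"
  shows "order x (pcompose p q) = order (poly q x) p"
proof -
  define r where "r = poly q x"
  define k where "k = order r p"
  obtain h where h: "p = [:-r, 1:] ^ k * h" and "\<not> [:-r, 1:] dvd h"
    using order_decomp[OF p] unfolding k_def by blast
  then have hr: "poly h r \<noteq> 0" by (simp add: poly_eq_0_iff_dvd)
  define L where "L = [:-x, 1:] * g"
  define H where "H = pcompose h q"
  have "pcompose [:-r, 1:] q = q - [:r:]"
    by (simp add: pcompose_pCons algebra_simps)
  also have "\<dots> = L"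
    unfolding r_def L_def by (rule q)
  finally have factor: "pcompose p q = L ^ k * H"
    unfolding H_def by (subst h) (simp only: pcompose_mult pcompose_hom.hom_power)
  have Hx: "poly H x \<noteq> 0" using hr by (simp add: H_def poly_pcompose r_def)
  have "g \<noteq> 0" using g by auto
  then have L0: "L \<noteq> 0" unfolding L_def by (intro no_zero_divisors) simp_all
  have "order x (L ^ k * H) = order x (L ^ k) + order x H"
    by (rule order_mult) (use L0 Hx in auto)
  also have "order x (L ^ k) = k * order x L" by (rule order_power[OF L0])
  also have "order x L = order x [:-x, 1:] + order x g"
    using L0 unfolding L_def by (rule order_mult)
  also have "order x [:-x, 1:] = 1" using order_power_n_n[of x 1] by simp
  finally show ?thesis
    using factor g Hx by (simp add: order_0I k_def r_def)
qed

lemma count_image_mset_eq_count: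
  assumes "\<And>z. z \<in># A \<Longrightarrow> f z = x \<longleftrightarrow> z = y"
  shows "count (image_mset f A) x = count A y"
proof -
  have "f -` {x} \<inter> set_mset A = {y} \<inter> set_mset A" using assms by auto
  then show ?thesis unfolding count_image_mset by (cases "y \<in># A") (auto simp: not_in_iff)
qed

lemma proots_pcompose_linear:
  fixes p :: "'a::field poly"
  assumes p: "p \<noteq> 0" and c: "c \<noteq> 0"
  shows "proots (pcompose p [:b, c:]) = image_mset (\<lambda>x. (x - b) / c) (proots p)"
proof (rule multiset_eqI)
  fix a
  have "[:b, c:] - [:poly [:b, c:] a:] = [:-a, 1:] * [:c:]" by (simp add: algebra_simps)
  from order_pcompose_simple_root[OF p this] c
  have "order a (pcompose p [:b, c:]) = order (b + c * a) p" by (simp add: ac_simps)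
  moreover have "count (image_mset (\<lambda>x. (x - b) / c) (proots p)) a = count (proots p) (b + c * a)"
    by (rule count_image_mset_eq_count) (use c in \<open>auto simp: field_simps\<close>)
  ultimately show "count (proots (pcompose p [:b, c:])) a
      = count (image_mset (\<lambda>x. (x - b) / c) (proots p)) a"
    using p c pcompose_eq_0_iff[of "[:b, c:]" p] by simp
qed

lemma order_pcompose_square:
  fixes p :: "'a::idom poly"
  assumes "p \<noteq> 0" and "x + x \<noteq> 0"
  shows "order x (pcompose p [:0, 0, 1:]) = order (x\<^sup>2) p"
proof -
  have "[:0, 0, 1:] - [:poly [:0, 0, 1:] x:] = [:-x, 1:] * [:x, 1:]"
    by (simp add: power2_eq_square)
  from order_pcompose_simple_root[OF assms(1) this] assms(2) show ?thesis
    by (simp add: power2_eq_square)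
qed

lemma proots_pcompose_square:
  fixes p :: "real poly"
  assumes p: "p \<noteq> 0" and pos: "\<forall>\<mu>\<in>#proots p. \<mu> > 0"
  shows "proots (pcompose p [:0, 0, 1:])
       = image_mset sqrt (proots p) + image_mset (\<lambda>\<mu>. - sqrt \<mu>) (proots p)"
proof (rule multiset_eqI)
  fix x :: real
  let ?R = "proots p"
  have sqrt_eq: "sqrt \<mu> = y \<longleftrightarrow> \<mu> = y\<^sup>2" if "\<mu> \<in># ?R" "y > 0" for \<mu> y
    using pos that by auto
  have count_pos: "count (image_mset sqrt ?R) x = (if x > 0 then count ?R (x\<^sup>2) else 0)"
  proof (cases "x > 0")
    case True
    then show ?thesis by (simp add: count_image_mset_eq_count sqrt_eq)
  next
    case False
    then have "x \<notin># image_mset sqrt ?R" using pos by auto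
    then show ?thesis using False by (simp only: not_in_iff if_False)
  qed
  have count_neg: "count (image_mset (\<lambda>\<mu>. - sqrt \<mu>) ?R) x = (if x < 0 then count ?R (x\<^sup>2) else 0)"
  proof (cases "x < 0")
    case True
    then have "- sqrt \<mu> = x \<longleftrightarrow> \<mu> = x\<^sup>2" if "\<mu> \<in># ?R" for \<mu>
      using sqrt_eq[OF that, of "- x"] by auto
    then show ?thesis using True by (simp add: count_image_mset_eq_count)
  next
    case False
    then have "x \<notin># image_mset (\<lambda>\<mu>. - sqrt \<mu>) ?R" using pos by auto
    then show ?thesis using False by (simp only: not_in_iff if_False)
  qed
  have p2: "pcompose p [:0, 0, 1:] \<noteq> 0" using p pcompose_eq_0_iff[of "[:0, 0, 1:]" p] by simp
  have "order x (pcompose p [:0, 0, 1:]) = (if x = 0 then 0 else order (x\<^sup>2) p)"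
  proof (cases "x = 0")
    case True
    have "poly p 0 \<noteq> 0" using pos p by auto
    then show ?thesis using True by (simp add: order_0I poly_pcompose)
  qed (simp add: order_pcompose_square[OF p])
  then show "count (proots (pcompose p [:0, 0, 1:])) x
      = count (image_mset sqrt ?R + image_mset (\<lambda>\<mu>. - sqrt \<mu>) ?R) x"
    using p p2 count_pos count_neg by auto
qed

section \<open>Characteristic polynomials\<close>

lemma det_on_eq_det:
  fixes M :: "'a \<Rightarrow> 'a \<Rightarrow> 'b::comm_ring_1"
  assumes f: "bij_betw f {0..<k} I"
  shows "det_on I M = det (mat k k (\<lambda>(i, j). M (f i) (f j)))"
proof -
  let ?A = "{0..<k}"
  let ?F = "\<lambda>p. map_permutation ?A f p"
  have inj: "inj_on f ?A" and fA: "f ` ?A = I" using f by (auto simp: bij_betw_def)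
  have F: "?F p x = (if x \<in> I then f (p (inv_into ?A f x)) else x)" for p x
    unfolding map_permutation_def restrict_id_def fA by auto
  have bij: "bij_betw ?F {p. p permutes ?A} {p. p permutes I}"
    using bij_betw_permutations[OF f] by (simp add: F[abs_def])
  have "det_on I M = (\<Sum>p | p permutes ?A. of_int (sign (?F p)) * (\<Prod>i\<in>I. M i (?F p i)))"
    unfolding det_on_def by (rule sum.reindex_bij_betw[OF bij, symmetric])
  also have "\<dots> = (\<Sum>p | p permutes ?A. of_int (sign p) * (\<Prod>i\<in>?A. M (f i) (f (p i))))"
  proof (rule sum.cong[OF refl])
    fix p assume "p \<in> {p. p permutes ?A}"
    then have p: "p permutes ?A" by simp
    have "sign (?F p) = sign p" by (rule sign_map_permutation[OF inj p]) simp
    moreover have "(\<Prod>i\<in>I. M i (?F p i)) = (\<Prod>i\<in>?A. M (f i) (?F p (f i)))"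
      by (rule prod.reindex_bij_betw[OF f, symmetric])
    moreover have "?F p (f i) = f (p i)" if "i \<in> ?A" for i
      using that inj fA permutes_in_image[OF p] by (auto simp: F)
    ultimately show "of_int (sign (?F p)) * (\<Prod>i\<in>I. M i (?F p i))
        = of_int (sign p) * (\<Prod>i\<in>?A. M (f i) (f (p i)))"
      by simp
  qed
  also have "\<dots> = det (mat k k (\<lambda>(i, j). M (f i) (f j)))"
    unfolding det_def'[OF mat_carrier]
    by (intro sum.cong refl arg_cong2[where f = "(*)"] prod.cong) (auto dest: permutes_in_image)
  finally show ?thesis .
qed

lemma charpoly_on_eq_char_poly:
  assumes f: "bij_betw f {0..<k} I"
  shows "charpoly_on I M = char_poly (mat k k (\<lambda>(i, j). M (f i) (f j)))"
proof -
  have inj: "inj_on f {0..<k}" using f by (simp add: bij_betw_def)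
  have "mat k k (\<lambda>(i, j). (if f i = f j then [:0, 1:] else 0) - [:M (f i) (f j):])
      = char_poly_matrix (mat k k (\<lambda>(i, j). M (f i) (f j)))"
    unfolding char_poly_matrix_def by (rule eq_matI) (auto simp: inj_on_eq_iff[OF inj])
  then show ?thesis
    unfolding charpoly_on_def char_poly_def det_on_eq_det[OF f] by simp
qed

lemma bij_betw_enum_append:
  fixes a b :: nat
  assumes f: "bij_betw f {0..<a} A" and g: "bij_betw g {0..<b} B" and AB: "A \<inter> B = {}"
  shows "bij_betw (\<lambda>i. if i < a then f i else g (i - a)) {0..<a + b} (A \<union> B)"
proof -
  have "bij_betw (\<lambda>i. i - a) {a..<a + b} {0..<b}"
    by (rule bij_betw_byWitness[where f' = "\<lambda>i. i + a"]) auto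
  from bij_betw_trans[OF this g] have "bij_betw (\<lambda>i. g (i - a)) {a..<a + b} B"
    by (simp add: comp_def)
  from bij_betw_disjoint_Un[OF f this _ AB]
  have "bij_betw (\<lambda>i. if i \<in> {0..<a} then f i else g (i - a)) ({0..<a} \<union> {a..<a + b}) (A \<union> B)"
    by auto
  then show ?thesis
    by (simp add: ivl_disj_un_two)
qed

text \<open>Multiplying by \<open>[[I, 0], [I, I]]\<close> on the left and by \<open>[[I, 0], [-I, I]]\<close> on the right makes
  the matrix block triangular with diagonal blocks \<open>P - Q\<close> and \<open>P + Q\<close>.\<close>

lemma det_four_block_mat_symmetric:
  fixes P Q :: "'a::idom mat"
  assumes P: "P \<in> carrier_mat N N" and Q: "Q \<in> carrier_mat N N"
  shows "det (four_block_mat P Q Q P) = det (P - Q) * det (P + Q)"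
proof -
  let ?L = "four_block_mat (1\<^sub>m N) (0\<^sub>m N N) (1\<^sub>m N) (1\<^sub>m N) :: 'a mat"
  let ?R = "four_block_mat (1\<^sub>m N) (0\<^sub>m N N) (- 1\<^sub>m N) (1\<^sub>m N) :: 'a mat"
  let ?M = "four_block_mat P Q Q P"
  have cL: "?L \<in> carrier_mat (N+N) (N+N)" by simp
  have cR: "?R \<in> carrier_mat (N+N) (N+N)" by simp
  have cM: "?M \<in> carrier_mat (N+N) (N+N)" using P by simp
  have LM: "?L * ?M = four_block_mat P Q (P + Q) (Q + P)"
    by (subst mult_four_block_mat[OF one_carrier_mat zero_carrier_mat one_carrier_mat
        one_carrier_mat P Q Q P]) (use P Q in auto)
  have m1: "X * - 1\<^sub>m N = - X" if "X \<in> carrier_mat N N" for X :: "'a mat"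
    by (rule eq_matI) (use that in \<open>auto simp: scalar_prod_def\<close>)
  have LMR: "four_block_mat P Q (P + Q) (Q + P) * ?R = four_block_mat (P - Q) Q (0\<^sub>m N N) (P + Q)"
  proof (subst mult_four_block_mat[OF P Q add_carrier_mat[OF Q] add_carrier_mat[OF P]
      one_carrier_mat zero_carrier_mat uminus_carrier_mat[OF one_carrier_mat] one_carrier_mat],
      rule cong_four_block_mat)
    show "P * 1\<^sub>m N + Q * - 1\<^sub>m N = P - Q" unfolding m1[OF Q] right_mult_one_mat[OF P]
      by (rule eq_matI) (use P Q in auto)
    show "P * 0\<^sub>m N N + Q * 1\<^sub>m N = Q" unfolding right_mult_zero_mat[OF P] right_mult_one_mat[OF Q]
      by (rule eq_matI) (use P Q in auto)
    have c1: "P + Q \<in> carrier_mat N N" "Q + P \<in> carrier_mat N N" using P Q by auto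
    show "(P + Q) * 1\<^sub>m N + (Q + P) * - 1\<^sub>m N = 0\<^sub>m N N"
      unfolding m1[OF c1(2)] right_mult_one_mat[OF c1(1)]
      by (rule eq_matI) (use P Q in auto)
    show "(P + Q) * 0\<^sub>m N N + (Q + P) * 1\<^sub>m N = P + Q"
      unfolding right_mult_zero_mat[OF c1(1)] right_mult_one_mat[OF c1(2)]
      by (rule eq_matI) (use P Q in auto)
  qed
  have "det (?L * ?M * ?R) = det ?L * det ?M * det ?R"
    using det_mult[OF mult_carrier_mat[OF cL cM] cR] det_mult[OF cL cM] by simp
  moreover have "det ?L = 1"
    by (subst det_four_block_mat_upper_right_zero[of _ N _ N]) auto
  moreover have "det ?R = 1"
    by (subst det_four_block_mat_upper_right_zero[of _ N _ N]) auto
  moreover have "det (?L * ?M * ?R) = det (P - Q) * det (P + Q)"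
    unfolding LM LMR using P Q
    by (subst det_four_block_mat_lower_left_zero[of _ N _ N]) auto
  ultimately show ?thesis by simp
qed

text \<open>Multiplying on the right by \<open>[[x I, 0], [-C, I]]\<close> leaves the Schur complement
  \<open>x\<^sup>2 I - B C\<close> in the upper left corner.\<close>

lemma det_four_block_mat_bipartite:
  fixes B C :: "'a::idom mat"
  assumes B: "B \<in> carrier_mat n m" and C: "C \<in> carrier_mat m n"
  shows "det (four_block_mat (x \<cdot>\<^sub>m 1\<^sub>m n) B C (x \<cdot>\<^sub>m 1\<^sub>m m)) * x ^ n
       = det ((x * x) \<cdot>\<^sub>m 1\<^sub>m n - B * C) * x ^ m"
proof -
  let ?M = "four_block_mat (x \<cdot>\<^sub>m 1\<^sub>m n) B C (x \<cdot>\<^sub>m 1\<^sub>m m)"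
  let ?N = "four_block_mat (x \<cdot>\<^sub>m 1\<^sub>m n) (0\<^sub>m n m) (- C) (1\<^sub>m m)"
  have cM: "?M \<in> carrier_mat (n+m) (n+m)" by simp
  have cN: "?N \<in> carrier_mat (n+m) (n+m)" by simp
  have MN: "?M * ?N = four_block_mat ((x * x) \<cdot>\<^sub>m 1\<^sub>m n - B * C) B (0\<^sub>m m n) (x \<cdot>\<^sub>m 1\<^sub>m m)"
  proof (subst mult_four_block_mat[OF smult_carrier_mat[OF one_carrier_mat] B C
      smult_carrier_mat[OF one_carrier_mat] smult_carrier_mat[OF one_carrier_mat] zero_carrier_mat
      uminus_carrier_mat[OF C] one_carrier_mat], rule cong_four_block_mat)
    have BC: "B * - C = - (B * C)"
      by (rule eq_matI) (use B C in \<open>auto simp: scalar_prod_def sum_negf\<close>)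
    have XX: "(x \<cdot>\<^sub>m 1\<^sub>m n) * (x \<cdot>\<^sub>m 1\<^sub>m n) = x \<cdot>\<^sub>m (x \<cdot>\<^sub>m 1\<^sub>m n)"
      by (subst mult_smult_assoc_mat[OF one_carrier_mat smult_carrier_mat[OF one_carrier_mat]])
        (simp add: left_mult_one_mat)
    show "(x \<cdot>\<^sub>m 1\<^sub>m n) * (x \<cdot>\<^sub>m 1\<^sub>m n) + B * - C = (x * x) \<cdot>\<^sub>m 1\<^sub>m n - B * C"
      unfolding XX BC by (rule eq_matI) (use B C in auto)
    show "(x \<cdot>\<^sub>m 1\<^sub>m n) * 0\<^sub>m n m + B * 1\<^sub>m m = B"
      unfolding right_mult_one_mat[OF B] by (rule eq_matI) (use B in auto)
    have CX: "C * (x \<cdot>\<^sub>m 1\<^sub>m n) = x \<cdot>\<^sub>m C"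
      by (subst mult_smult_distrib[OF C one_carrier_mat]) (simp add: right_mult_one_mat[OF C])
    have XC: "(x \<cdot>\<^sub>m 1\<^sub>m m) * (- C) = x \<cdot>\<^sub>m (- C)"
      by (subst mult_smult_assoc_mat[OF one_carrier_mat uminus_carrier_mat[OF C]])
        (simp only: left_mult_one_mat[OF uminus_carrier_mat[OF C]])
    show "C * (x \<cdot>\<^sub>m 1\<^sub>m n) + (x \<cdot>\<^sub>m 1\<^sub>m m) * - C = 0\<^sub>m m n"
      unfolding CX XC by (rule eq_matI) (use C in auto)
    show "C * 0\<^sub>m n m + (x \<cdot>\<^sub>m 1\<^sub>m m) * 1\<^sub>m m = x \<cdot>\<^sub>m 1\<^sub>m m"
      by (rule eq_matI) (use C in auto)
  qed
  have "det (?M * ?N) = det ?M * det ?N" by (rule det_mult[OF cM cN])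
  moreover have "det ?N = x ^ n"
    by (subst det_four_block_mat_upper_right_zero[of _ n _ m]) (use C in auto)
  moreover have "det (?M * ?N) = det ((x * x) \<cdot>\<^sub>m 1\<^sub>m n - B * C) * x ^ m"
    unfolding MN using B C
    by (subst det_four_block_mat_lower_left_zero[of _ n _ m]) auto
  ultimately show ?thesis by simp
qed

lemma det_map_pcompose_char_poly_matrix:
  "det (map_mat (\<lambda>p. pcompose p q) (char_poly_matrix A)) = pcompose (char_poly A) q"
  unfolding char_poly_def by (rule comm_ring_hom.hom_det[OF pcompose_hom.comm_ring_hom_axioms])

lemma char_poly_four_block_mat_cart:
  fixes A :: "'a::idom mat"
  assumes A: "A \<in> carrier_mat N N"
  shows "char_poly (four_block_mat A (1\<^sub>m N) (1\<^sub>m N) A)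
       = pcompose (char_poly A) [:1, 1:] * pcompose (char_poly A) [:-1, 1:]"
proof -
  let ?C = "char_poly_matrix A"
  have C: "?C \<in> carrier_mat N N" using A by simp
  have "char_poly_matrix (four_block_mat A (1\<^sub>m N) (1\<^sub>m N) A)
      = four_block_mat ?C (- 1\<^sub>m N) (- 1\<^sub>m N) ?C"
    by (rule eq_matI) (use A in \<open>auto simp: char_poly_matrix_def one_pCons\<close>)
  then have "char_poly (four_block_mat A (1\<^sub>m N) (1\<^sub>m N) A)
      = det (?C - - 1\<^sub>m N) * det (?C + - 1\<^sub>m N)"
    unfolding char_poly_def
    using det_four_block_mat_symmetric[OF C uminus_carrier_mat[OF one_carrier_mat]]
    by simp
  also have "?C - - 1\<^sub>m N = map_mat (\<lambda>p. pcompose p [:1, 1:]) ?C"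
    by (rule eq_matI) (use A in \<open>auto simp: char_poly_matrix_def pcompose_pCons\<close>)
  also have "?C + - 1\<^sub>m N = map_mat (\<lambda>p. pcompose p [:-1, 1:]) ?C"
    by (rule eq_matI) (use A in \<open>auto simp: char_poly_matrix_def pcompose_pCons\<close>)
  finally show ?thesis by (simp only: det_map_pcompose_char_poly_matrix)
qed

lemma char_poly_four_block_mat_kron:
  fixes A :: "'a::idom mat"
  assumes A: "A \<in> carrier_mat N N"
  shows "char_poly (four_block_mat (0\<^sub>m N N) A A (0\<^sub>m N N))
       = (-1) ^ N * pcompose (char_poly A) [:0, -1:] * char_poly A"
proof -
  let ?C = "char_poly_matrix A"
  let ?X = "[:0, 1:] \<cdot>\<^sub>m 1\<^sub>m N :: 'a poly mat"
  let ?B = "map_mat (\<lambda>a. [:- a:]) A"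
  have B: "?B \<in> carrier_mat N N" using A by simp
  have "char_poly_matrix (four_block_mat (0\<^sub>m N N) A A (0\<^sub>m N N)) = four_block_mat ?X ?B ?B ?X"
    by (rule eq_matI) (use A in \<open>auto simp: char_poly_matrix_def\<close>)
  then have "char_poly (four_block_mat (0\<^sub>m N N) A A (0\<^sub>m N N)) = det (?X - ?B) * det (?X + ?B)"
    unfolding char_poly_def using det_four_block_mat_symmetric[OF _ B] by simp
  also have "?X + ?B = ?C" unfolding char_poly_matrix_def using A by simp
  also have "?X - ?B = (-1) \<cdot>\<^sub>m map_mat (\<lambda>p. pcompose p [:0, -1:]) ?C"
    by (rule eq_matI) (use A in \<open>auto simp: char_poly_matrix_def pcompose_pCons\<close>)
  also have "det \<dots> = (-1) ^ N * pcompose (char_poly A) [:0, -1:]"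
    using char_poly_matrix_closed[OF A] by (simp add: det_map_pcompose_char_poly_matrix)
  finally show ?thesis unfolding char_poly_def .
qed

lemma char_poly_four_block_mat_bipartite:
  fixes B C :: "'a::idom mat"
  assumes B: "B \<in> carrier_mat n m" and C: "C \<in> carrier_mat m n"
  shows "char_poly (four_block_mat (0\<^sub>m n n) B C (0\<^sub>m m m)) * [:0, 1:] ^ n
       = pcompose (char_poly (B * C)) [:0, 0, 1:] * [:0, 1:] ^ m"
proof -
  let ?B = "map_mat (\<lambda>a. [:- a:]) B"
  let ?C = "map_mat (\<lambda>a. [:- a:]) C"
  have B': "?B \<in> carrier_mat n m" and C': "?C \<in> carrier_mat m n" using B C by auto
  have "char_poly_matrix (four_block_mat (0\<^sub>m n n) B C (0\<^sub>m m m))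
      = four_block_mat ([:0, 1:] \<cdot>\<^sub>m 1\<^sub>m n) ?B ?C ([:0, 1:] \<cdot>\<^sub>m 1\<^sub>m m)"
    by (rule eq_matI) (use B C in \<open>auto simp: char_poly_matrix_def\<close>)
  moreover have "([:0, 1:] * [:0, 1:]) \<cdot>\<^sub>m 1\<^sub>m n - ?B * ?C
      = map_mat (\<lambda>p. pcompose p [:0, 0, 1:]) (char_poly_matrix (B * C))"
  proof (rule eq_matI)
    fix i j assume "i < dim_row (map_mat (\<lambda>p. pcompose p [:0, 0, 1:]) (char_poly_matrix (B * C)))"
      and "j < dim_col (map_mat (\<lambda>p. pcompose p [:0, 0, 1:]) (char_poly_matrix (B * C)))"
    then have i: "i < n" and j: "j < n" using B C by (auto simp: char_poly_matrix_def)
    have "(?B * ?C) $$ (i, j) = (\<Sum>k\<in>{0..<m}. [:B $$ (i, k) * C $$ (k, j):])"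
      using i j B C by (simp add: scalar_prod_def ac_simps)
    also have "\<dots> = [:(B * C) $$ (i, j):]"
      using i j B C by (simp add: sum_to_poly scalar_prod_def)
    finally show "(([:0, 1:] * [:0, 1:]) \<cdot>\<^sub>m 1\<^sub>m n - ?B * ?C) $$ (i, j)
        = map_mat (\<lambda>p. pcompose p [:0, 0, 1:]) (char_poly_matrix (B * C)) $$ (i, j)"
      using i j B C by (simp add: char_poly_matrix_def pcompose_pCons)
  qed (use B C in \<open>auto simp: char_poly_matrix_def\<close>)
  ultimately show ?thesis
    unfolding char_poly_def using det_four_block_mat_bipartite[OF B' C']
    by (simp add: det_map_pcompose_char_poly_matrix[unfolded char_poly_def])
qed

lemma char_poly_nonzero: "A \<in> carrier_mat n n \<Longrightarrow> char_poly A \<noteq> 0"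
  using degree_monic_char_poly[of A n] by auto

lemma charpoly_on_nonzero:
  assumes "finite I"
  shows "charpoly_on I M \<noteq> 0"
proof -
  obtain f where "bij_betw f {0..<card I} I" using ex_bij_betw_nat_finite[OF assms] ..
  then show ?thesis by (simp add: charpoly_on_eq_char_poly char_poly_nonzero[OF mat_carrier])
qed

lemma pcompose_char_poly_nonzero:
  fixes A :: "'a::idom mat"
  assumes "A \<in> carrier_mat n n" and "degree q > 0"
  shows "pcompose (char_poly A) q \<noteq> 0"
  using assms pcompose_eq_0_iff[of q "char_poly A"] char_poly_nonzero by blast

lemma proots_char_poly_pcompose_linear:
  fixes A :: "'a::field mat"
  assumes "A \<in> carrier_mat n n" and "c \<noteq> 0"
  shows "proots (pcompose (char_poly A) [:b, c:])
       = image_mset (\<lambda>x. (x - b) / c) (proots (char_poly A))"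
  by (rule proots_pcompose_linear[OF char_poly_nonzero]) (use assms in auto)

lemma eigenvalue_symmetric_real:
  fixes A :: "real mat"
  assumes A: "A \<in> carrier_mat n n" and sym: "\<And>i j. i < n \<Longrightarrow> j < n \<Longrightarrow> A $$ (i, j) = A $$ (j, i)"
    and ev: "eigenvalue (map_mat complex_of_real A) l"
  shows "Im l = 0"
proof -
  \<comment> \<open>For an eigenvector \<open>v\<close>, \<open>v\<^sup>* A v = l |v|\<^sup>2\<close> is real because \<open>A\<close> is real symmetric.\<close>
  let ?Ac = "map_mat complex_of_real A"
  obtain v where v: "v \<in> carrier_vec n" "v \<noteq> 0\<^sub>v n" and Av: "?Ac *\<^sub>v v = l \<cdot>\<^sub>v v"
    using ev A unfolding eigenvalue_def eigenvector_def by auto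
  define q where "q = (\<Sum>i<n. \<Sum>j<n. cnj (v $ i) * complex_of_real (A $$ (i, j)) * v $ j)"
  define S where "S = (\<Sum>i<n. (cmod (v $ i))\<^sup>2)"
  have Avi: "(?Ac *\<^sub>v v) $ i = (\<Sum>j<n. complex_of_real (A $$ (i, j)) * v $ j)" if "i < n" for i
    using that A v by (auto simp: scalar_prod_def lessThan_atLeast0 intro!: sum.cong)
  have "q = (\<Sum>i<n. cnj (v $ i) * (?Ac *\<^sub>v v) $ i)"
    unfolding q_def by (rule sum.cong[OF refl]) (simp add: Avi sum_distrib_left mult.assoc)
  also have "\<dots> = l * (\<Sum>i<n. cnj (v $ i) * v $ i)"
    using v by (simp add: Av sum_distrib_left algebra_simps)
  also have "(\<Sum>i<n. cnj (v $ i) * v $ i) = complex_of_real S"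
    unfolding S_def of_real_sum
    by (intro sum.cong refl) (simp only: complex_norm_square mult.commute)
  finally have qS: "q = l * complex_of_real S" .
  have "cnj q = (\<Sum>i<n. \<Sum>j<n. v $ i * complex_of_real (A $$ (i, j)) * cnj (v $ j))"
    unfolding q_def by (simp add: cnj_sum)
  also have "\<dots> = (\<Sum>j<n. \<Sum>i<n. v $ i * complex_of_real (A $$ (i, j)) * cnj (v $ j))"
    by (rule sum.swap)
  also have "\<dots> = q"
    unfolding q_def by (intro sum.cong refl) (simp add: sym mult.commute mult.left_commute)
  finally have "Im (cnj q) = Im q" by simp
  then have "Im q = 0" by simp
  obtain k where k: "k < n" "v $ k \<noteq> 0"
  proof (rule ccontr)
    assume "\<not> thesis"
    then have "v = 0\<^sub>v n" using that v by (intro eq_vecI) auto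
    then show False using v by simp
  qed
  have "(cmod (v $ k))\<^sup>2 \<le> S" unfolding S_def by (rule member_le_sum) (use k in auto)
  moreover have "(cmod (v $ k))\<^sup>2 > 0" using k by simp
  ultimately have "S > 0" by linarith
  then show "Im l = 0" using \<open>Im q = 0\<close> qS by simp
qed

lemma char_poly_symmetric_real_root:
  fixes A :: "real mat"
  assumes A: "A \<in> carrier_mat n n" and n: "n > 0"
    and sym: "\<And>i j. i < n \<Longrightarrow> j < n \<Longrightarrow> A $$ (i, j) = A $$ (j, i)"
  shows "\<exists>x. poly (char_poly A) x = 0"
proof -
  let ?Ac = "map_mat complex_of_real A"
  have Ac: "?Ac \<in> carrier_mat n n" using A by simp
  have "degree (char_poly ?Ac) = n" using degree_monic_char_poly[OF Ac] by simp
  then have "\<not> constant (poly (char_poly ?Ac))" using n constant_degree[of "char_poly ?Ac"] by simp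
  then obtain l where l: "poly (char_poly ?Ac) l = 0" using fundamental_theorem_of_algebra by blast
  then have "Im l = 0"
    using eigenvalue_symmetric_real[OF A sym] eigenvalue_root_char_poly[OF Ac] by simp
  then have "l = complex_of_real (Re l)" by (simp add: complex_eq_iff)
  with l have "poly (map_poly of_real (char_poly A)) (complex_of_real (Re l)) = 0"
    by (simp add: of_real_hom.char_poly_hom[OF A])
  then have "complex_of_real (poly (char_poly A) (Re l)) = 0"
    by (simp add: of_real_hom.poly_map_poly)
  then show ?thesis by blast
qed

section \<open>Cycles in signed graphs\<close>

lemma finite_sg_edges: "finite V \<Longrightarrow> finite (sg_edges V s)"
  by (rule finite_subset[of _ "Pow V"]) (auto simp: sg_edges_def)

lemma doubleton_in_sg_edges_iff:
  assumes sg: "signed_graph V s"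
  shows "{u, w} \<in> sg_edges V s \<longleftrightarrow> s u w \<noteq> 0"
proof
  assume "{u, w} \<in> sg_edges V s"
  then obtain a b where "{u, w} = {a, b}" "s a b \<noteq> 0" unfolding sg_edges_def by auto
  then show "s u w \<noteq> 0" using sg unfolding signed_graph_def by (auto simp: doubleton_eq_iff)
next
  assume "s u w \<noteq> 0"
  then show "{u, w} \<in> sg_edges V s" using sg unfolding signed_graph_def sg_edges_def by blast
qed

lemma card_incident_sg_edges:
  assumes sg: "signed_graph V s"
  shows "card {e \<in> sg_edges V s. u \<in> e} = card {w \<in> V. s u w \<noteq> 0}"
proof -
  have "{e \<in> sg_edges V s. u \<in> e} = (\<lambda>w. {u, w}) ` {w \<in> V. s u w \<noteq> 0}"
  proof
    show "{e \<in> sg_edges V s. u \<in> e} \<subseteq> (\<lambda>w. {u, w}) ` {w \<in> V. s u w \<noteq> 0}"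
    proof clarify
      fix e assume "e \<in> sg_edges V s" "u \<in> e"
      then obtain a b where "e = {a, b}" "s a b \<noteq> 0" "u = a \<or> u = b"
        unfolding sg_edges_def by auto
      then have "e = {u, b} \<and> s u b \<noteq> 0 \<or> e = {u, a} \<and> s u a \<noteq> 0"
        using sg unfolding signed_graph_def by (auto simp: insert_commute)
      then show "e \<in> (\<lambda>w. {u, w}) ` {w \<in> V. s u w \<noteq> 0}"
        using sg unfolding signed_graph_def by blast
    qed
  qed (use doubleton_in_sg_edges_iff[OF sg] in auto)
  moreover have "inj_on (\<lambda>w. {u, w}) {w \<in> V. s u w \<noteq> 0}"
    by (rule inj_onI) (auto simp: doubleton_eq_iff)
  ultimately show ?thesis by (simp add: card_image)
qed

definition sg_path :: "'a set \<Rightarrow> ('a \<Rightarrow> 'a \<Rightarrow> int) \<Rightarrow> 'a list \<Rightarrow> bool" where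
  "sg_path V s xs \<longleftrightarrow> xs \<noteq> [] \<and> distinct xs \<and> set xs \<subseteq> V \<and>
     (\<forall>i. Suc i < length xs \<longrightarrow> s (xs ! i) (xs ! Suc i) \<noteq> 0)"

lemma sg_path_length_le: "finite V \<Longrightarrow> sg_path V s xs \<Longrightarrow> length xs \<le> card V"
  unfolding sg_path_def by (metis card_mono distinct_card)

lemma finite_sg_paths: "finite V \<Longrightarrow> finite {xs. sg_path V s xs}"
  by (rule finite_subset[OF _ finite_lists_length_le[of V "card V"]])
    (auto simp: sg_path_length_le, auto simp: sg_path_def)

lemma is_cycle_take_sg_path:
  assumes xs: "sg_path V s xs" and j: "2 \<le> j" "j < length xs" and closing: "s (xs ! j) (xs ! 0) \<noteq> 0"
  shows "is_cycle V s (take (Suc j) xs)"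
  unfolding is_cycle_def
proof (intro conjI allI impI)
  show "3 \<le> length (take (Suc j) xs)" "distinct (take (Suc j) xs)" "set (take (Suc j) xs) \<subseteq> V"
    using xs j by (auto simp: sg_path_def dest: in_set_takeD)
  fix i assume "i < length (take (Suc j) xs)"
  then have "i \<le> j" by simp
  then show "s (take (Suc j) xs ! i) (take (Suc j) xs ! ((i + 1) mod length (take (Suc j) xs))) \<noteq> 0"
    using xs j closing by (cases "i = j") (auto simp: sg_path_def)
qed

lemma ex_longest_sg_path:
  assumes "finite V" and "V \<noteq> {}"
  obtains xs where "sg_path V s xs" and "\<And>ys. sg_path V s ys \<Longrightarrow> length ys \<le> length xs"
proof -
  let ?P = "{xs. sg_path V s xs}"
  obtain v0 where "v0 \<in> V" using assms(2) by auto
  then have "[v0] \<in> ?P" by (simp add: sg_path_def)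
  then have "Max (length ` ?P) \<in> length ` ?P"
    using finite_sg_paths[OF assms(1)] by (intro Max_in) auto
  then obtain xs where "sg_path V s xs" and max: "length xs = Max (length ` ?P)" by auto
  moreover have "length ys \<le> length xs" if "sg_path V s ys" for ys
    unfolding max using that finite_sg_paths[OF assms(1)] by (auto intro: Max_ge)
  ultimately show ?thesis using that by blast
qed

lemma min_degree_two_imp_cycle:
  assumes sg: "signed_graph V s" and "V \<noteq> {}"
    and deg: "\<And>v. v \<in> V \<Longrightarrow> 2 \<le> card {w \<in> V. s v w \<noteq> 0}"
  shows "\<exists>xs. is_cycle V s xs"
proof -
  have fin: "finite V" and sym: "\<And>u v. s u v = s v u" and irr: "\<And>v. s v v = 0"
    using sg by (auto simp: signed_graph_def)
  obtain xs where xs: "sg_path V s xs" and longest: "\<And>ys. sg_path V s ys \<Longrightarrow> length ys \<le> length xs"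
    using ex_longest_sg_path[OF fin \<open>V \<noteq> {}\<close>] by blast
  define v where "v = xs ! 0"
  have v: "v \<in> V" using xs by (auto simp: sg_path_def v_def)
  define x where "x = (if 2 \<le> length xs then xs ! 1 else v)"
  have "\<not> {w \<in> V. s v w \<noteq> 0} \<subseteq> {x}"
    using deg[OF v] card_mono[of "{x}" "{w \<in> V. s v w \<noteq> 0}"] by auto
  then obtain u where u: "u \<in> V" "s v u \<noteq> 0" "u \<noteq> x" by auto
  have "u \<in> set xs"
  proof (rule ccontr)
    assume "u \<notin> set xs"
    with xs u have "sg_path V s (u # xs)"
      by (auto simp: sg_path_def v_def sym nth_Cons split: nat.split)
    then show False using longest by fastforce
  qed
  then obtain j where j: "j < length xs" "xs ! j = u" by (auto simp: in_set_conv_nth)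
  have "j \<noteq> 0"
  proof
    assume "j = 0"
    then have "u = v" using j v_def by simp
    then show False using u irr by simp
  qed
  moreover have "j \<noteq> 1" using j u x_def by auto
  ultimately have "is_cycle V s (take (Suc j) xs)"
    using j u sym v_def by (intro is_cycle_take_sg_path[OF xs]) auto
  then show ?thesis ..
qed

lemma is_cycle_mono:
  "is_cycle V' s' xs \<Longrightarrow> V' \<subseteq> V \<Longrightarrow> (\<And>u v. s' u v \<noteq> 0 \<Longrightarrow> s u v \<noteq> 0) \<Longrightarrow> is_cycle V s xs"
  unfolding is_cycle_def by blast

lemma card_sg_edges_le_delete_vertex:
  assumes "finite V"
  shows "card (sg_edges V s)
       \<le> card (sg_edges (V - {v}) (\<lambda>x y. if x = v \<or> y = v then 0 else s x y))
         + card {e \<in> sg_edges V s. v \<in> e}"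
proof -
  let ?s' = "\<lambda>x y. if x = v \<or> y = v then 0 else s x y"
  have "sg_edges V s \<subseteq> sg_edges (V - {v}) ?s' \<union> {e \<in> sg_edges V s. v \<in> e}"
    by (auto simp: sg_edges_def)
  moreover have "finite (sg_edges V s)" "finite (sg_edges (V - {v}) ?s')"
    using assms by (simp_all add: finite_sg_edges)
  ultimately have "card (sg_edges V s) \<le> card (sg_edges (V - {v}) ?s' \<union> {e \<in> sg_edges V s. v \<in> e})"
    by (intro card_mono) auto
  also have "\<dots> \<le> card (sg_edges (V - {v}) ?s') + card {e \<in> sg_edges V s. v \<in> e}"
    by (rule card_Un_le)
  finally show ?thesis .
qed

lemma card_sg_edges_ge_imp_cycle:
  assumes "signed_graph V s" and "V \<noteq> {}" and "card V \<le> card (sg_edges V s)"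
  shows "\<exists>xs. is_cycle V s xs"
  using assms
proof (induction "card V" arbitrary: V s rule: less_induct)
  case less
  have fin: "finite V" and irr: "\<And>v. s v v = 0" using less.prems(1) by (auto simp: signed_graph_def)
  show ?case
  proof (cases "\<forall>v\<in>V. 2 \<le> card {w \<in> V. s v w \<noteq> 0}")
    case True
    then show ?thesis using min_degree_two_imp_cycle less.prems(1,2) by blast
  next
    case False
    then obtain v where v: "v \<in> V" and deg: "card {w \<in> V. s v w \<noteq> 0} \<le> 1" by auto
    define s' where "s' x y = (if x = v \<or> y = v then 0 else s x y)" for x y
    let ?V' = "V - {v}"
    have sg': "signed_graph ?V' s'" using less.prems(1) by (auto simp: signed_graph_def s'_def)
    have "card (sg_edges V s) \<le> card (sg_edges ?V' s') + card {e \<in> sg_edges V s. v \<in> e}"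
      unfolding s'_def by (rule card_sg_edges_le_delete_vertex[OF fin])
    also have "card {e \<in> sg_edges V s. v \<in> e} \<le> 1"
      using deg card_incident_sg_edges[OF less.prems(1)] by simp
    finally have edges: "card ?V' \<le> card (sg_edges ?V' s')"
      using less.prems(3) v fin by simp
    have "?V' \<noteq> {}"
    proof
      assume "?V' = {}"
      then have "V = {v}" using v by auto
      then show False using less.prems(3) irr by (simp add: sg_edges_def)
    qed
    moreover have "card ?V' < card V" by (rule card_Diff1_less[OF fin v])
    ultimately obtain xs where "is_cycle ?V' s' xs" using less.hyps sg' edges by blast
    then have "is_cycle V s xs" by (rule is_cycle_mono) (auto simp: s'_def split: if_splits)
    then show ?thesis ..
  qed
qed

lemma is_cycle_first_edge:
  assumes "is_cycle V s xs"
  shows "{xs ! 0, xs ! 1} \<in> cycle_edges xs"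
proof -
  have "3 \<le> length xs" using assms by (simp add: is_cycle_def)
  then have one: "(0 + 1) mod length xs = 1" and pos: "0 < length xs" by auto
  have "{xs ! 0, xs ! ((0 + 1) mod length xs)} \<in> cycle_edges xs"
    unfolding cycle_edges_def using pos by (intro CollectI exI[where x = 0]) simp
  then show ?thesis by (simp only: one)
qed

text \<open>If there were more edges than vertices, deleting an edge of a cycle would leave enough edges
  for a second cycle avoiding that edge.\<close>

lemma unicyclic_card_sg_edges_le:
  assumes sg: "signed_graph V s" and uc: "unicyclic V s"
  shows "card (sg_edges V s) \<le> card V"
proof (rule ccontr)
  assume "\<not> ?thesis"
  then have many: "card V + 1 \<le> card (sg_edges V s)" by simp
  have fin: "finite V" using sg by (simp add: signed_graph_def)
  have "V \<noteq> {}" using uc by (simp add: unicyclic_def sg_connected_def)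
  then obtain xs where xs: "is_cycle V s xs" using card_sg_edges_ge_imp_cycle[OF sg] many by auto
  define a where "a = xs ! 0"
  define b where "b = xs ! 1"
  have ab_xs: "{a, b} \<in> cycle_edges xs" unfolding a_def b_def by (rule is_cycle_first_edge[OF xs])
  define s' where "s' x y = (if {x, y} = {a, b} then 0 else s x y)" for x y
  have sg': "signed_graph V s'" using sg by (auto simp: signed_graph_def s'_def insert_commute)
  have "sg_edges V s \<subseteq> insert {a, b} (sg_edges V s')"
    by (auto simp: sg_edges_def s'_def)
  then have "card (sg_edges V s) \<le> card (insert {a, b} (sg_edges V s'))"
    using fin by (intro card_mono) (auto intro: finite_sg_edges)
  also have "\<dots> \<le> card (sg_edges V s') + 1"
    using fin by (simp add: card_insert_if finite_sg_edges)
  finally have "card V \<le> card (sg_edges V s')" using many by simp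
  then obtain ys where ys: "is_cycle V s' ys"
    using card_sg_edges_ge_imp_cycle[OF sg' \<open>V \<noteq> {}\<close>] by blast
  have "{a, b} \<notin> cycle_edges ys"
    using ys unfolding cycle_edges_def is_cycle_def s'_def by auto
  moreover have "is_cycle V s ys"
    by (rule is_cycle_mono[OF ys]) (auto simp: s'_def split: if_splits)
  moreover have "card {cycle_edges xs | xs. is_cycle V s xs} = 1"
    using uc unfolding unicyclic_def by (elim conjE)
  then obtain z where "{cycle_edges xs | xs. is_cycle V s xs} = {z}"
    by (rule card_1_singletonE)
  ultimately show False using xs ab_xs by blast
qed

section \<open>Spectra\<close>

lemma bij_betw_enum_K2:
  fixes N :: nat
  assumes f: "bij_betw f {0..<N} I"
  shows "bij_betw (\<lambda>i. if i < N then (f i, False) else (f (i - N), True)) {0..<N + N}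
           (prod_vertices I K2_vertices)"
proof -
  have layer: "bij_betw (\<lambda>i. (f i, b)) {0..<N} (I \<times> {b})" for b
    using bij_betw_trans[OF f, of "\<lambda>x. (x, b)"] by (auto simp: bij_betw_def inj_on_def comp_def)
  have "bij_betw (\<lambda>i. if i < N then (f i, False) else (f (i - N), True)) {0..<N + N}
          (I \<times> {False} \<union> I \<times> {True})"
    by (rule bij_betw_enum_append[of "\<lambda>i. (f i, False)" N _ "\<lambda>i. (f i, True)"]) (auto intro: layer)
  moreover have "I \<times> {False} \<union> I \<times> {True} = prod_vertices I K2_vertices"
    by (auto simp: prod_vertices_def K2_vertices_def)
  ultimately show ?thesis by simp
qed

lemma adj_spectrum_cart_K2:
  assumes I: "finite I"
  shows "adj_spectrum (prod_vertices I K2_vertices) (cart_sign s K2_sign)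
       = image_mset (\<lambda>x. x + 1) (adj_spectrum I s) + image_mset (\<lambda>x. x - 1) (adj_spectrum I s)"
proof -
  define N where "N = card I"
  obtain f where f: "bij_betw f {0..<N} I" using ex_bij_betw_nat_finite[OF I] unfolding N_def ..
  then have inj: "inj_on f {0..<N}" by (simp add: bij_betw_def)
  define g where "g i = (if i < N then (f i, False) else (f (i - N), True))" for i
  define A where "A = mat N N (\<lambda>(i, j). adj_matrix s (f i) (f j))"
  have A: "A \<in> carrier_mat N N" by (simp add: A_def)
  have "mat (N + N) (N + N) (\<lambda>(i, j). adj_matrix (cart_sign s K2_sign) (g i) (g j))
      = four_block_mat A (1\<^sub>m N) (1\<^sub>m N) A"
    by (rule eq_matI)
      (auto simp: A_def g_def adj_matrix_def cart_sign_def K2_sign_def inj_on_eq_iff[OF inj])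
  then have "adj_spectrum (prod_vertices I K2_vertices) (cart_sign s K2_sign)
      = proots (pcompose (char_poly A) [:1, 1:] * pcompose (char_poly A) [:-1, 1:])"
    unfolding adj_spectrum_def spectrum_on_def
      charpoly_on_eq_char_poly[OF bij_betw_enum_K2[OF f], folded g_def]
    by (simp add: char_poly_four_block_mat_cart[OF A])
  also have "\<dots> = image_mset (\<lambda>x. x + 1) (proots (char_poly A))
      + image_mset (\<lambda>x. x - 1) (proots (char_poly A))"
    using A by (simp add: proots_mult pcompose_char_poly_nonzero proots_char_poly_pcompose_linear
        add.commute)
  also have "proots (char_poly A) = adj_spectrum I s"
    unfolding adj_spectrum_def spectrum_on_def charpoly_on_eq_char_poly[OF f] A_def ..
  finally show ?thesis .
qed

lemma adj_spectrum_kron_K2: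
  assumes I: "finite I"
  shows "adj_spectrum (prod_vertices I K2_vertices) (kron_sign s K2_sign)
       = adj_spectrum I s + image_mset uminus (adj_spectrum I s)"
proof -
  define N where "N = card I"
  obtain f where f: "bij_betw f {0..<N} I" using ex_bij_betw_nat_finite[OF I] unfolding N_def ..
  define g where "g i = (if i < N then (f i, False) else (f (i - N), True))" for i
  define A where "A = mat N N (\<lambda>(i, j). adj_matrix s (f i) (f j))"
  have A: "A \<in> carrier_mat N N" by (simp add: A_def)
  have "mat (N + N) (N + N) (\<lambda>(i, j). adj_matrix (kron_sign s K2_sign) (g i) (g j))
      = four_block_mat (0\<^sub>m N N) A A (0\<^sub>m N N)"
    by (rule eq_matI) (auto simp: A_def g_def adj_matrix_def kron_sign_def K2_sign_def)
  then have "adj_spectrum (prod_vertices I K2_vertices) (kron_sign s K2_sign)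
      = proots ((-1) ^ N * pcompose (char_poly A) [:0, -1:] * char_poly A)"
    unfolding adj_spectrum_def spectrum_on_def
      charpoly_on_eq_char_poly[OF bij_betw_enum_K2[OF f], folded g_def]
    by (simp add: char_poly_four_block_mat_kron[OF A])
  also have "\<dots> = proots (char_poly A) + image_mset uminus (proots (char_poly A))"
    using A by (simp add: proots_mult proots_power pcompose_char_poly_nonzero char_poly_nonzero
        proots_char_poly_pcompose_linear add.commute)
  also have "proots (char_poly A) = adj_spectrum I s"
    unfolding adj_spectrum_def spectrum_on_def charpoly_on_eq_char_poly[OF f] A_def ..
  finally show ?thesis .
qed

lemma sum_subdiv_sign_square:
  assumes sg: "signed_graph V s" and \<theta>: "valid_subdiv_signs V s \<theta>"
  shows "(\<Sum>e\<in>sg_edges V s.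
            real_of_int (subdiv_sign V s \<theta> (Inl u) (Inr e) * subdiv_sign V s \<theta> (Inl u) (Inr e)))
       = card {w \<in> V. s u w \<noteq> 0}"
proof -
  let ?E = "sg_edges V s"
  have "(\<Sum>e\<in>?E.
            real_of_int (subdiv_sign V s \<theta> (Inl u) (Inr e) * subdiv_sign V s \<theta> (Inl u) (Inr e)))
      = (\<Sum>e\<in>?E. if u \<in> e then 1 else 0)"
  proof (rule sum.cong[OF refl])
    fix e assume "e \<in> ?E"
    then have "u \<in> e \<Longrightarrow> \<theta> u e \<in> {-1, 1}" using \<theta> unfolding valid_subdiv_signs_def by blast
    then show "real_of_int (subdiv_sign V s \<theta> (Inl u) (Inr e) * subdiv_sign V s \<theta> (Inl u) (Inr e))
        = (if u \<in> e then 1 else 0)"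
      using \<open>e \<in> ?E\<close> by auto
  qed
  also have "\<dots> = card {e \<in> ?E. u \<in> e}"
    using sg by (simp add: sum.If_cases Int_def conj_commute signed_graph_def finite_sg_edges)
  finally show ?thesis using card_incident_sg_edges[OF sg] by simp
qed

lemma lap_matrix_eq_sum_subdiv_sign:
  assumes sg: "signed_graph V s" and \<theta>: "valid_subdiv_signs V s \<theta>"
    and u: "u \<in> V" and w: "w \<in> V"
  shows "lap_matrix V s u w
       = (\<Sum>e\<in>sg_edges V s.
            of_int (subdiv_sign V s \<theta> (Inl u) (Inr e) * subdiv_sign V s \<theta> (Inl w) (Inr e)))"
proof (cases "u = w")
  case True
  have "s u u = 0" using sg by (simp add: signed_graph_def)
  then have "lap_matrix V s u u = card {w \<in> V. s u w \<noteq> 0}" by (simp add: lap_matrix_def)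
  then show ?thesis using True sum_subdiv_sign_square[OF sg \<theta>, of u] by (simp only:)
next
  case False
  let ?E = "sg_edges V s"
  have "(\<Sum>e\<in>?E.
          real_of_int (subdiv_sign V s \<theta> (Inl u) (Inr e) * subdiv_sign V s \<theta> (Inl w) (Inr e)))
      = (\<Sum>e\<in>?E. if e = {u, w} then real_of_int (\<theta> u {u, w} * \<theta> w {u, w}) else 0)"
  proof (rule sum.cong[OF refl])
    fix e assume e: "e \<in> ?E"
    then obtain a b where "e = {a, b}" "s a b \<noteq> 0" unfolding sg_edges_def by auto
    then have "u \<in> e \<and> w \<in> e \<longleftrightarrow> e = {u, w}" using False by auto
    then show "real_of_int (subdiv_sign V s \<theta> (Inl u) (Inr e) * subdiv_sign V s \<theta> (Inl w) (Inr e))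
        = (if e = {u, w} then real_of_int (\<theta> u {u, w} * \<theta> w {u, w}) else 0)"
      using e by (cases "e = {u, w}") auto
  qed
  also have "\<dots> = (if {u, w} \<in> ?E then real_of_int (\<theta> u {u, w} * \<theta> w {u, w}) else 0)"
    using sg by (simp add: sum.delta signed_graph_def finite_sg_edges)
  also have "\<dots> = lap_matrix V s u w"
    using \<theta> u w False doubleton_in_sg_edges_iff[OF sg]
    by (auto simp: lap_matrix_def valid_subdiv_signs_def)
  finally show ?thesis by simp
qed

lemma incidence_mat_mult_transpose:
  assumes sg: "signed_graph V s" and \<theta>: "valid_subdiv_signs V s \<theta>"
    and fv: "bij_betw fv {0..<n} V" and fe: "bij_betw fe {0..<m} (sg_edges V s)"
  defines "B \<equiv> mat n m (\<lambda>(i, j). real_of_int (subdiv_sign V s \<theta> (Inl (fv i)) (Inr (fe j))))"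
  shows "B * transpose_mat B = mat n n (\<lambda>(i, j). lap_matrix V s (fv i) (fv j))"
proof (rule eq_matI)
  fix i j assume "i < dim_row (mat n n (\<lambda>(i, j). lap_matrix V s (fv i) (fv j)))"
    and "j < dim_col (mat n n (\<lambda>(i, j). lap_matrix V s (fv i) (fv j)))"
  then have i: "i < n" and j: "j < n" by auto
  then have fvV: "fv i \<in> V" "fv j \<in> V" using fv by (auto simp: bij_betw_def)
  have "(B * transpose_mat B) $$ (i, j)
      = (\<Sum>k\<in>{0..<m}. real_of_int (subdiv_sign V s \<theta> (Inl (fv i)) (Inr (fe k))
          * subdiv_sign V s \<theta> (Inl (fv j)) (Inr (fe k))))"
    using i j by (simp add: B_def scalar_prod_def)
  also have "\<dots> = (\<Sum>e\<in>sg_edges V s. real_of_int (subdiv_sign V s \<theta> (Inl (fv i)) (Inr e)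
          * subdiv_sign V s \<theta> (Inl (fv j)) (Inr e)))"
    by (rule sum.reindex_bij_betw[OF fe])
  also have "\<dots> = lap_matrix V s (fv i) (fv j)"
    by (rule lap_matrix_eq_sum_subdiv_sign[OF sg \<theta> fvV, symmetric])
  finally show "(B * transpose_mat B) $$ (i, j)
      = mat n n (\<lambda>(i, j). lap_matrix V s (fv i) (fv j)) $$ (i, j)"
    using i j by simp
qed (auto simp: B_def)

lemma charpoly_on_subdiv:
  assumes sg: "signed_graph V s" and \<theta>: "valid_subdiv_signs V s \<theta>"
  shows "charpoly_on (subdiv_vertices V s) (adj_matrix (subdiv_sign V s \<theta>)) * [:0, 1:] ^ card V
       = pcompose (charpoly_on V (lap_matrix V s)) [:0, 0, 1:] * [:0, 1:] ^ card (sg_edges V s)"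
proof -
  let ?E = "sg_edges V s"
  define n where "n = card V"
  define m where "m = card ?E"
  have finV: "finite V" using sg by (simp add: signed_graph_def)
  obtain fv where fv: "bij_betw fv {0..<n} V"
    using ex_bij_betw_nat_finite[OF finV] unfolding n_def ..
  obtain fe where fe: "bij_betw fe {0..<m} ?E"
    using ex_bij_betw_nat_finite[OF finite_sg_edges[OF finV]] unfolding m_def ..
  define h where "h i = (if i < n then Inl (fv i) else Inr (fe (i - n)))" for i
  have "bij_betw (Inl \<circ> fv) {0..<n} (Inl ` V)" "bij_betw (Inr \<circ> fe) {0..<m} (Inr ` ?E)"
    by (rule bij_betw_trans[OF fv], simp add: bij_betw_def,
        rule bij_betw_trans[OF fe], simp add: bij_betw_def)
  then have h: "bij_betw h {0..<n + m} (subdiv_vertices V s)"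
    unfolding subdiv_vertices_def h_def by (intro bij_betw_enum_append) (auto simp: comp_def)
  define B where "B = mat n m (\<lambda>(i, j). real_of_int (subdiv_sign V s \<theta> (Inl (fv i)) (Inr (fe j))))"
  have B: "B \<in> carrier_mat n m" by (simp add: B_def)
  have "mat (n + m) (n + m) (\<lambda>(i, j). adj_matrix (subdiv_sign V s \<theta>) (h i) (h j))
      = four_block_mat (0\<^sub>m n n) B (transpose_mat B) (0\<^sub>m m m)"
    by (rule eq_matI) (auto simp: h_def B_def adj_matrix_def)
  then have "charpoly_on (subdiv_vertices V s) (adj_matrix (subdiv_sign V s \<theta>)) * [:0, 1:] ^ n
      = pcompose (char_poly (B * transpose_mat B)) [:0, 0, 1:] * [:0, 1:] ^ m"
    using char_poly_four_block_mat_bipartite[OF B transpose_carrier_mat[THEN iffD2, OF B]]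
    by (simp add: charpoly_on_eq_char_poly[OF h])
  also have "B * transpose_mat B = mat n n (\<lambda>(i, j). lap_matrix V s (fv i) (fv j))"
    unfolding B_def by (rule incidence_mat_mult_transpose[OF sg \<theta> fv fe])
  finally show ?thesis
    unfolding charpoly_on_eq_char_poly[OF fv] n_def m_def .
qed

lemma lap_spectrum_nonempty:
  assumes sg: "signed_graph V s" and "V \<noteq> {}"
  shows "lap_spectrum V s \<noteq> {#}"
proof -
  have fin: "finite V" and sym: "\<And>u v. s u v = s v u" using sg by (auto simp: signed_graph_def)
  define n where "n = card V"
  have n: "n > 0" using fin \<open>V \<noteq> {}\<close> by (simp add: n_def card_gt_0_iff)
  obtain f where f: "bij_betw f {0..<n} V" using ex_bij_betw_nat_finite[OF fin] unfolding n_def ..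
  define L where "L = mat n n (\<lambda>(i, j). lap_matrix V s (f i) (f j))"
  have "\<exists>x. poly (char_poly L) x = 0"
    by (rule char_poly_symmetric_real_root[of _ n]) (use n in \<open>auto simp: L_def lap_matrix_def sym\<close>)
  then obtain x where "poly (charpoly_on V (lap_matrix V s)) x = 0"
    unfolding charpoly_on_eq_char_poly[OF f] L_def by blast
  then have "x \<in># lap_spectrum V s"
    using charpoly_on_nonzero[OF fin] by (simp add: lap_spectrum_def spectrum_on_def)
  then show ?thesis by auto
qed

lemma card_le_card_sg_edges_if_lap_spectrum_pos:
  assumes sg: "signed_graph V s" and \<theta>: "valid_subdiv_signs V s \<theta>"
    and pos: "\<forall>\<mu>\<in>#lap_spectrum V s. \<mu> > 0"
  shows "card V \<le> card (sg_edges V s)"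
proof (rule ccontr)
  define pS where "pS = charpoly_on (subdiv_vertices V s) (adj_matrix (subdiv_sign V s \<theta>))"
  define pL where "pL = charpoly_on V (lap_matrix V s)"
  assume "\<not> ?thesis"
  then obtain k where "card V = Suc k + card (sg_edges V s)"
    by (metis not_le less_imp_Suc_add add_Suc add.commute)
  then have split: "[:0, 1:] ^ card V = [:0, 1:] ^ Suc k * [:0, 1:] ^ card (sg_edges V s)"
    by (simp only: power_add)
  have "pS * [:0, 1:] ^ Suc k * [:0, 1:] ^ card (sg_edges V s)
      = pcompose pL [:0, 0, 1:] * [:0, 1:] ^ card (sg_edges V s)"
    using charpoly_on_subdiv[OF sg \<theta>] unfolding mult.assoc split[symmetric] pS_def pL_def .
  then have "pS * [:0, 1:] ^ Suc k = pcompose pL [:0, 0, 1:]"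
    by (rule mult_right_cancel[THEN iffD1, rotated]) simp
  from arg_cong[OF this, of "\<lambda>p. poly p 0"] have "poly pL 0 = 0"
    by (simp add: poly_pcompose)
  moreover have "pL \<noteq> 0" using sg by (simp add: pL_def signed_graph_def charpoly_on_nonzero)
  ultimately have "0 \<in># lap_spectrum V s" by (simp add: lap_spectrum_def spectrum_on_def pL_def)
  then show False using pos by auto
qed

lemma adj_spectrum_subdiv:
  assumes sg: "signed_graph V s" and \<theta>: "valid_subdiv_signs V s \<theta>"
    and edges: "card (sg_edges V s) = card V" and pos: "\<forall>\<mu>\<in>#lap_spectrum V s. \<mu> > 0"
  shows "adj_spectrum (subdiv_vertices V s) (subdiv_sign V s \<theta>)
       = image_mset sqrt (lap_spectrum V s) + image_mset (\<lambda>\<mu>. - sqrt \<mu>) (lap_spectrum V s)"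
proof -
  define pS where "pS = charpoly_on (subdiv_vertices V s) (adj_matrix (subdiv_sign V s \<theta>))"
  define pL where "pL = charpoly_on V (lap_matrix V s)"
  have pL: "pL \<noteq> 0" using sg by (simp add: pL_def signed_graph_def charpoly_on_nonzero)
  have posL: "\<forall>\<mu>\<in>#proots pL. \<mu> > 0" using pos by (simp add: pL_def lap_spectrum_def spectrum_on_def)
  have "pS * [:0, 1:] ^ card V = pcompose pL [:0, 0, 1:] * [:0, 1:] ^ card V"
    using charpoly_on_subdiv[OF sg \<theta>] unfolding edges pS_def pL_def .
  then have "pS = pcompose pL [:0, 0, 1:]"
    by (rule mult_right_cancel[THEN iffD1, rotated]) simp
  then show ?thesis
    unfolding adj_spectrum_def spectrum_on_def pS_def[symmetric] lap_spectrum_def pL_def[symmetric]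
    using proots_pcompose_square[OF pL posL] by simp
qed

section \<open>Energy\<close>

lemma sum_mset_mono_eq_iff:
  fixes f g :: "'a \<Rightarrow> real"
  assumes "\<And>x. x \<in># M \<Longrightarrow> g x \<le> f x"
  shows "(\<Sum>x\<in>#M. f x) = (\<Sum>x\<in>#M. g x) \<longleftrightarrow> (\<forall>x\<in>#M. f x = g x)"
  using assms
proof (induction M)
  case (add a M)
  have "(\<Sum>x\<in>#M. g x) \<le> (\<Sum>x\<in>#M. f x)" using add.prems by (intro sum_mset_mono) auto
  then show ?case using add by fastforce
qed simp

lemma shifts_ne_symmetrization:
  fixes M :: "real multiset"
  assumes "M \<noteq> {#}"
  shows "image_mset (\<lambda>x. x + 1) M + image_mset (\<lambda>x. x - 1) M \<noteq> M + image_mset uminus M"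
proof
  assume eq: "image_mset (\<lambda>x. x + 1) M + image_mset (\<lambda>x. x - 1) M = M + image_mset uminus M"
  define r where "r = Max (abs ` set_mset M)"
  have r: "\<bar>x\<bar> \<le> r" if "x \<in># M" for x using that by (simp add: r_def)
  have "r \<in> abs ` set_mset M" unfolding r_def using assms by (intro Max_in) auto
  then obtain x0 where x0: "x0 \<in># M" "\<bar>x0\<bar> = r" by auto
  define y where "y = (if 0 \<le> x0 then x0 + 1 else x0 - 1)"
  have "y \<in># M + image_mset uminus M" unfolding eq[symmetric] y_def using x0 by auto
  then obtain z where "z \<in># M" "\<bar>y\<bar> = \<bar>z\<bar>" by auto
  moreover have "\<bar>y\<bar> = r + 1" using x0 by (auto simp: y_def)
  ultimately show False using r by fastforce
qed

lemma sum_abs_shifts_eq_iff: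
  fixes M :: "real multiset"
  shows "(\<Sum>x\<in>#image_mset (\<lambda>x. x + 1) M + image_mset (\<lambda>x. x - 1) M. \<bar>x\<bar>)
       = (\<Sum>x\<in>#M + image_mset uminus M. \<bar>x\<bar>) \<longleftrightarrow> (\<forall>x\<in>#M. 1 \<le> \<bar>x\<bar>)"
proof -
  have "(\<Sum>x\<in>#image_mset (\<lambda>x. x + 1) M + image_mset (\<lambda>x. x - 1) M. \<bar>x\<bar>)
      = (\<Sum>x\<in>#M. \<bar>x + 1\<bar> + \<bar>x - 1\<bar>)"
    by (simp add: multiset.map_comp o_def sum_mset.distrib)
  moreover have "(\<Sum>x\<in>#M + image_mset uminus M. \<bar>x\<bar>) = (\<Sum>x\<in>#M. 2 * \<bar>x\<bar>)"
    by (simp add: multiset.map_comp o_def sum_mset.distrib[symmetric])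
  moreover have "(\<Sum>x\<in>#M. \<bar>x + 1\<bar> + \<bar>x - 1\<bar>) = (\<Sum>x\<in>#M. 2 * \<bar>x\<bar>)
      \<longleftrightarrow> (\<forall>x\<in>#M. \<bar>x + 1\<bar> + \<bar>x - 1\<bar> = 2 * \<bar>x\<bar>)"
    by (rule sum_mset_mono_eq_iff) linarith
  moreover have "\<bar>x + 1\<bar> + \<bar>x - 1\<bar> = 2 * \<bar>x\<bar> \<longleftrightarrow> 1 \<le> \<bar>x\<bar>" for x :: real
    by linarith
  ultimately show ?thesis by simp
qed

theorem theorem4p10:
  fixes V :: "'a set" and s :: "'a \<Rightarrow> 'a \<Rightarrow> int" and \<theta> :: "'a \<Rightarrow> 'a set \<Rightarrow> int"
  assumes "signed_graph V s"
    and "sg_edges V s \<noteq> {}"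
    and "unicyclic V s"
    and "unbalanced V s"
    and "valid_subdiv_signs V s \<theta>"
    and "\<forall>\<mu>\<in>#lap_spectrum V s. \<mu> > 0"
  shows "(noncospectral
            (prod_vertices (subdiv_vertices V s) K2_vertices)
            (cart_sign (subdiv_sign V s \<theta>) K2_sign)
            (prod_vertices (subdiv_vertices V s) K2_vertices)
            (kron_sign (subdiv_sign V s \<theta>) K2_sign)
          \<and> equienergetic
            (prod_vertices (subdiv_vertices V s) K2_vertices)
            (cart_sign (subdiv_sign V s \<theta>) K2_sign)
            (prod_vertices (subdiv_vertices V s) K2_vertices)
            (kron_sign (subdiv_sign V s \<theta>) K2_sign))
         \<longleftrightarrow> (\<forall>\<mu>\<in>#lap_spectrum V s. \<mu> \<ge> 1)"
proof -
  let ?R = "lap_spectrum V s"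
  let ?A = "adj_spectrum (subdiv_vertices V s) (subdiv_sign V s \<theta>)"
  have fin: "finite (subdiv_vertices V s)"
    using assms(1) by (simp add: subdiv_vertices_def signed_graph_def finite_sg_edges)
  have "card (sg_edges V s) = card V"
    using unicyclic_card_sg_edges_le[OF assms(1,3)]
      card_le_card_sg_edges_if_lap_spectrum_pos[OF assms(1,5,6)] by simp
  then have A: "?A = image_mset sqrt ?R + image_mset (\<lambda>\<mu>. - sqrt \<mu>) ?R"
    using adj_spectrum_subdiv[OF assms(1,5) _ assms(6)] by simp
  have "V \<noteq> {}" using assms(2) by (auto simp: sg_edges_def)
  then have "?A \<noteq> {#}" using A lap_spectrum_nonempty[OF assms(1)] by simp
  moreover have "(\<forall>x\<in>#?A. 1 \<le> \<bar>x\<bar>) \<longleftrightarrow> (\<forall>\<mu>\<in>#?R. 1 \<le> \<mu>)"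
  proof
    assume "\<forall>x\<in>#?A. 1 \<le> \<bar>x\<bar>"
    then have "1 \<le> \<bar>sqrt \<mu>\<bar>" if "\<mu> \<in># ?R" for \<mu> using that unfolding A by simp
    then show "\<forall>\<mu>\<in>#?R. 1 \<le> \<mu>" using assms(6) by fastforce
  qed (auto simp: A)
  ultimately show ?thesis
    unfolding noncospectral_def equienergetic_def energy_def
      adj_spectrum_cart_K2[OF fin] adj_spectrum_kron_K2[OF fin]
    using shifts_ne_symmetrization sum_abs_shifts_eq_iff by simp
qed

end
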